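(* There exists a connected symmetric configuration $v_3$ with strong chromatic number exactly 6 for $v=11$ and for every $v\geq 13$.
   Context: A symmetric configuration $v_3$ consists of a set of $v$ points and a collection of $v$ blocks, each block being a 3-element subset of the points, such that every point lies in exactly 3 blocks and any two distinct points lie in at most one common block; it is connected if it is not the union of two configurations on disjoint nonempty point sets. A strong colouring is an assignment of colours to points such that the three points of every block receive three distinct colours; the strong chromatic number is the minimum number of colours in a strong colouring. *)

theory Defs
  imports Main
begin

definition sym_config :: "'a set \<Rightarrow> 'a set set \<Rightarrow> bool" where
  "sym_config P B \<longleftrightarrow>
     finite P \<and> (\<forall>b\<in>B. b \<subseteq> P \<and> card b = 3) \<and> card B = card P \<and>
     (\<forall>p\<in>P. card {b\<in>B. p \<in> b} = 3) \<and>
     (\<forall>p\<in>P. \<forall>q\<in>P. p \<noteq> q \<longrightarrow> card {b\<in>B. p \<in> b \<and> q \<in> b} \<le> 1)"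

definition connected_config :: "'a set \<Rightarrow> 'a set set \<Rightarrow> bool" where
  "connected_config P B \<longleftrightarrow>
     \<not> (\<exists>P1 P2 B1 B2. P1 \<noteq> {} \<and> P2 \<noteq> {} \<and> P1 \<inter> P2 = {} \<and>
          P = P1 \<union> P2 \<and> B = B1 \<union> B2 \<and> sym_config P1 B1 \<and> sym_config P2 B2)"

definition strong_colouring :: "'a set set \<Rightarrow> ('a \<Rightarrow> nat) \<Rightarrow> bool" where
  "strong_colouring B c \<longleftrightarrow> (\<forall>b\<in>B. inj_on c b)"

definition strong_chromatic_number :: "'a set \<Rightarrow> 'a set set \<Rightarrow> nat" where
  "strong_chromatic_number P B = (LEAST k. \<exists>c. strong_colouring B c \<and> card (c ` P) = k)"

end

theory Submission
  imports Defs
begin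

text \<open>
  Six colours are needed when a configuration has six pairwise collinear points, or when among
  any three points two are collinear and v > 10 (each colour class then has at most two points).

  For v = 11 take the cyclic configuration with blocks {i, i+1, i+3} mod 11. Two points are
  collinear exactly when their cyclic distance is at most 3, and three cyclic gaps in [4, 7]
  cannot add up to 11 or 22, so the second criterion applies.

  For v = k + 13 start from the cyclic configuration with the same base block on k + 7 points,
  remove its block {k+6, 0, 2} and add six points k+7, ..., k+12 carrying seven new blocks: the
  K_6 on the new points is decomposed into four triangles and a perfect matching, and each
  matching edge is completed by one of k+6, 0, 2. The new points are pairwise collinear, and
  colouring the cyclic part by residues mod 4 extends to a 6-colouring.
\<close>

lemma sym_config_image:
  fixes blk :: "'i \<Rightarrow> 'a set"
  assumes "finite P" "finite I" "card I = card P"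
    and blk_3: "\<And>i. i \<in> I \<Longrightarrow> blk i \<subseteq> P \<and> card (blk i) = 3"
    and blk_meet: "\<And>i j. i \<in> I \<Longrightarrow> j \<in> I \<Longrightarrow> i \<noteq> j \<Longrightarrow> card (blk i \<inter> blk j) \<le> 1"
    and blocks_through: "\<And>p. p \<in> P \<Longrightarrow> card {i\<in>I. p \<in> blk i} = 3"
  shows "sym_config P (blk ` I)"
proof -
  have unique_block_of_pair: "i = j" if "i \<in> I" "j \<in> I" "p \<noteq> q" "{p, q} \<subseteq> blk i \<inter> blk j" for i j p q
  proof (rule ccontr)
    assume "i \<noteq> j"
    have "finite (blk i \<inter> blk j)" using blk_3[OF \<open>i \<in> I\<close>] by (simp add: card_ge_0_finite)
    then have "card {p, q} \<le> card (blk i \<inter> blk j)" using that(4) by (rule card_mono)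
    then show False using blk_meet[OF that(1,2) \<open>i \<noteq> j\<close>] \<open>p \<noteq> q\<close> by simp
  qed
  have inj: "inj_on blk I"
  proof (rule inj_onI)
    fix i j assume ij: "i \<in> I" "j \<in> I" "blk i = blk j"
    obtain p q r where "blk i = {p, q, r}" "p \<noteq> q" using blk_3[OF ij(1)] card_3_iff by metis
    then show "i = j" using unique_block_of_pair[OF ij(1,2) \<open>p \<noteq> q\<close>] ij(3) by simp
  qed
  have "card {b\<in>blk ` I. p \<in> b} = 3" if "p \<in> P" for p
  proof -
    have "{b\<in>blk ` I. p \<in> b} = blk ` {i\<in>I. p \<in> blk i}" by blast
    moreover have "inj_on blk {i\<in>I. p \<in> blk i}" using inj by (rule inj_on_subset) blast
    ultimately show ?thesis using blocks_through[OF that] by (simp add: card_image)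
  qed
  moreover have "card {b\<in>blk ` I. p \<in> b \<and> q \<in> b} \<le> 1" if "p \<noteq> q" for p q
  proof -
    have "{b\<in>blk ` I. p \<in> b \<and> q \<in> b} = blk ` {i\<in>I. p \<in> blk i \<and> q \<in> blk i}" by blast
    moreover have "card {i\<in>I. p \<in> blk i \<and> q \<in> blk i} \<le> 1"
      using unique_block_of_pair[OF _ _ that] \<open>finite I\<close> by (auto simp: card_le_Suc0_iff_eq)
    ultimately show ?thesis using card_image_le[of "{i\<in>I. p \<in> blk i \<and> q \<in> blk i}" blk] \<open>finite I\<close>
      by simp
  qed
  ultimately show ?thesis
    using assms(1,3) blk_3 card_image[OF inj] unfolding sym_config_def by auto
qed

lemma connected_config_image:
  assumes "\<And>i. i \<in> I \<Longrightarrow> blk i \<subseteq> P" "r \<in> P"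
    and closed_sets: "\<And>S. \<forall>i\<in>I. blk i \<inter> S \<noteq> {} \<longrightarrow> blk i \<subseteq> S \<Longrightarrow> r \<in> S \<Longrightarrow> P \<subseteq> S"
  shows "connected_config P (blk ` I)"
  unfolding connected_config_def
proof (intro notI, elim exE conjE)
  fix P1 P2 B1 B2
  assume split: "P1 \<noteq> {}" "P2 \<noteq> {}" "P1 \<inter> P2 = {}" "P = P1 \<union> P2" "blk ` I = B1 \<union> B2"
    and configs: "sym_config P1 B1" "sym_config P2 B2"
  have "b \<subseteq> P1" if "b \<in> B1" for b using configs(1) that unfolding sym_config_def by auto
  moreover have "b \<subseteq> P2" if "b \<in> B2" for b using configs(2) that unfolding sym_config_def by auto
  ultimately have "\<forall>i\<in>I. blk i \<inter> P1 \<noteq> {} \<longrightarrow> blk i \<subseteq> P1"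
    and "\<forall>i\<in>I. blk i \<inter> P2 \<noteq> {} \<longrightarrow> blk i \<subseteq> P2"
    using split(3,5) by blast+
  then show False using closed_sets[of P1] closed_sets[of P2] split assms(2) by blast
qed

lemma closed_set_contains_chain:
  assumes closed: "\<forall>i\<in>I. blk i \<inter> S \<noteq> {} \<longrightarrow> blk i \<subseteq> S" and "0 \<in> S"
    and chain: "\<And>t. t < n \<Longrightarrow> \<exists>i\<in>I. t \<in> blk i \<and> Suc t \<in> blk i"
  shows "{0..n} \<subseteq> S"
proof -
  have "t \<in> S" if "t \<le> n" for t
    using that
  proof (induction t)
    case (Suc t)
    then obtain i where "i \<in> I" "t \<in> blk i" "Suc t \<in> blk i" using chain[of t] by auto
    then show ?case using closed Suc by auto
  qed (rule \<open>0 \<in> S\<close>)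
  then show ?thesis by auto
qed

lemma strong_colouring_distinct:
  "strong_colouring B c \<Longrightarrow> b \<in> B \<Longrightarrow> p \<in> b \<Longrightarrow> q \<in> b \<Longrightarrow> p \<noteq> q \<Longrightarrow> c p \<noteq> c q"
  unfolding strong_colouring_def inj_on_def by blast

lemma card_le_card_colours_if_pairwise_collinear:
  assumes "K \<subseteq> P" "finite P" "strong_colouring B c"
    and collinear: "\<And>p q. p \<in> K \<Longrightarrow> q \<in> K \<Longrightarrow> p \<noteq> q \<Longrightarrow> \<exists>b\<in>B. p \<in> b \<and> q \<in> b"
  shows "card K \<le> card (c ` P)"
proof -
  have "inj_on c K"
    by (rule inj_onI, rule ccontr) (use collinear strong_colouring_distinct[OF assms(3)] in blast)
  then have "card K = card (c ` K)" by (simp add: card_image)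
  also have "\<dots> \<le> card (c ` P)" using assms(1,2) by (intro card_mono) auto
  finally show ?thesis .
qed

lemma card_le_twice_card_colours:
  assumes "finite P" "strong_colouring B c"
    and collinear_pair: "\<And>p q r. p \<in> P \<Longrightarrow> q \<in> P \<Longrightarrow> r \<in> P \<Longrightarrow> p \<noteq> q \<Longrightarrow> p \<noteq> r \<Longrightarrow> q \<noteq> r
      \<Longrightarrow> \<exists>b\<in>B. {p, q} \<subseteq> b \<or> {p, r} \<subseteq> b \<or> {q, r} \<subseteq> b"
  shows "card P \<le> 2 * card (c ` P)"
proof -
  have colour_class: "card {p\<in>P. c p = y} \<le> 2" for y
  proof (rule ccontr)
    assume "\<not> ?thesis"
    then have "3 \<le> card {p\<in>P. c p = y}" by simp
    then obtain T where "T \<subseteq> {p\<in>P. c p = y}" "card T = 3" by (meson obtain_subset_with_card_n)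
    then obtain p q r where "{p, q, r} \<subseteq> P" "c p = y" "c q = y" "c r = y"
      and "p \<noteq> q" "p \<noteq> r" "q \<noteq> r"
      by (auto simp: card_3_iff)
    then show False
      using collinear_pair[of p q r] strong_colouring_distinct[OF assms(2)] by (metis insert_subset)
  qed
  have "P = (\<Union>y\<in>c ` P. {p\<in>P. c p = y})" by auto
  then have "card P \<le> (\<Sum>y\<in>c ` P. card {p\<in>P. c p = y})"
    by (metis card_UN_le \<open>finite P\<close> finite_imageI)
  also have "\<dots> \<le> (\<Sum>y\<in>c ` P. 2)" by (rule sum_mono) (rule colour_class)
  also have "\<dots> = 2 * card (c ` P)" by simp
  finally show ?thesis .
qed

lemma strong_chromatic_number_eqI:
  assumes "strong_colouring B c" "\<And>p. p \<in> P \<Longrightarrow> c p < k"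
    and lower: "\<And>c. strong_colouring B c \<Longrightarrow> k \<le> card (c ` P)"
  shows "strong_chromatic_number P B = k"
proof -
  have "card (c ` P) \<le> card {..<k}" using assms(2) by (intro card_mono) auto
  then have "card (c ` P) = k" using lower[OF assms(1)] by simp
  then show ?thesis
    unfolding strong_chromatic_number_def using assms(1) lower by (intro Least_equality) auto
qed

definition cyclic_block :: "nat \<Rightarrow> nat set" where
  "cyclic_block i = {i, (i + 1) mod 11, (i + 3) mod 11}"

definition cyclic_colour :: "nat \<Rightarrow> nat" where
  "cyclic_colour p = [0, 1, 2, 3, 0, 1, 4, 2, 3, 5, 4] ! p"

lemma cyclic_block_subset_card: "\<forall>i<11. cyclic_block i \<subseteq> {..<11} \<and> card (cyclic_block i) = 3"
  unfolding cyclic_block_def by code_simp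

lemma cyclic_blocks_meet: "\<forall>i<11. \<forall>j<11. i = j \<or> card (cyclic_block i \<inter> cyclic_block j) \<le> 1"
  unfolding cyclic_block_def by code_simp

lemma cyclic_blocks_through: "\<forall>p<11. card (Set.filter (\<lambda>i. p \<in> cyclic_block i) {..<11}) = 3"
  unfolding cyclic_block_def by code_simp

lemma cyclic_collinear_or_far:
  assumes "p < 11" "q < 11" "p \<noteq> q"
  shows "(q + 11 - p) mod 11 \<in> {4..7} \<or> (\<exists>i<11. {p, q} \<subseteq> cyclic_block i)"
proof -
  have "\<forall>p<11. \<forall>q<11. p = q \<or> (q + 11 - p) mod 11 \<in> {4..7}
      \<or> list_ex (\<lambda>i. p \<in> cyclic_block i \<and> q \<in> cyclic_block i) [0..<11]"
    unfolding cyclic_block_def by code_simp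
  then have "(q + 11 - p) mod 11 \<in> {4..7}
      \<or> list_ex (\<lambda>i. p \<in> cyclic_block i \<and> q \<in> cyclic_block i) [0..<11]"
    using assms by blast
  then show ?thesis by (auto simp: list_ex_iff)
qed

lemma cyclic_colour_strong: "\<forall>i<11. inj_on cyclic_colour (cyclic_block i)"
  unfolding cyclic_block_def cyclic_colour_def by code_simp

lemma cyclic_colour_less: "\<forall>p<11. cyclic_colour p < 6"
  unfolding cyclic_colour_def by code_simp

lemma circular_gaps_sum_mod:
  fixes p q r n :: nat
  assumes "p < n" "q < n" "r < n"
  shows "((q + n - p) mod n + (r + n - q) mod n + (p + n - r) mod n) mod n = 0"
proof -
  have "((q + n - p) mod n + (r + n - q) mod n + (p + n - r) mod n) mod n
      = ((q + n - p) + (r + n - q) + (p + n - r)) mod n"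
    by (metis mod_add_eq mod_add_left_eq)
  also have "(q + n - p) + (r + n - q) + (p + n - r) = 3 * n" using assms by linarith
  finally show ?thesis by simp
qed

lemma no_three_pairwise_far:
  fixes p q r :: nat
  assumes "p < 11" "q < 11" "r < 11"
    and "(q + 11 - p) mod 11 \<in> {4..7}" "(r + 11 - q) mod 11 \<in> {4..7}" "(p + 11 - r) mod 11 \<in> {4..7}"
  shows False
proof -
  obtain m where "(q + 11 - p) mod 11 + (r + 11 - q) mod 11 + (p + 11 - r) mod 11 = 11 * m"
    using circular_gaps_sum_mod[OF assms(1-3)] by blast
  then have "12 \<le> 11 * m" "11 * m \<le> 21" using assms(4-6) by auto
  then show False by presburger
qed

lemma cyclic_collinear_pair_among_three:
  assumes "p < 11" "q < 11" "r < 11" "p \<noteq> q" "p \<noteq> r" "q \<noteq> r"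
  shows "\<exists>b\<in>cyclic_block ` {..<11}. {p, q} \<subseteq> b \<or> {p, r} \<subseteq> b \<or> {q, r} \<subseteq> b"
proof (rule ccontr)
  assume "\<not> ?thesis"
  then have "(q + 11 - p) mod 11 \<in> {4..7}" "(r + 11 - q) mod 11 \<in> {4..7}" "(p + 11 - r) mod 11 \<in> {4..7}"
    using cyclic_collinear_or_far[of p q] cyclic_collinear_or_far[of q r] cyclic_collinear_or_far[of r p] assms
    by (auto simp: insert_commute)
  then show False using no_three_pairwise_far assms(1-3) by blast
qed

lemma cyclic_config_11:
  "sym_config {..<11} (cyclic_block ` {..<11}) \<and> connected_config {..<11} (cyclic_block ` {..<11})
    \<and> strong_chromatic_number {..<11} (cyclic_block ` {..<11}) = 6"
proof (intro conjI)
  show "sym_config {..<11} (cyclic_block ` {..<11})"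
    using cyclic_block_subset_card cyclic_blocks_meet cyclic_blocks_through
    by (intro sym_config_image) auto
  show "connected_config {..<11} (cyclic_block ` {..<11})"
  proof (rule connected_config_image)
    fix S assume "\<forall>i\<in>{..<11}. cyclic_block i \<inter> S \<noteq> {} \<longrightarrow> cyclic_block i \<subseteq> S" "0 \<in> S"
    moreover have "\<exists>i\<in>{..<11}. t \<in> cyclic_block i \<and> Suc t \<in> cyclic_block i" if "t < 10" for t
      using that by (auto simp: cyclic_block_def)
    ultimately have "{0..10} \<subseteq> S" by (rule closed_set_contains_chain)
    then show "{..<11} \<subseteq> S" by auto
  qed (use cyclic_block_subset_card in auto)
  have "6 \<le> card (c ` {..<11})" if c: "strong_colouring (cyclic_block ` {..<11}) c" for c
  proof -
    have "card {..<11::nat} \<le> 2 * card (c ` {..<11})"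
    proof (rule card_le_twice_card_colours[OF _ c])
      fix p q r :: nat assume "p \<in> {..<11}" "q \<in> {..<11}" "r \<in> {..<11}" "p \<noteq> q" "p \<noteq> r" "q \<noteq> r"
      then show "\<exists>b\<in>cyclic_block ` {..<11}. {p, q} \<subseteq> b \<or> {p, r} \<subseteq> b \<or> {q, r} \<subseteq> b"
        by (intro cyclic_collinear_pair_among_three) auto
    qed simp
    then show ?thesis by simp
  qed
  then show "strong_chromatic_number {..<11} (cyclic_block ` {..<11}) = 6"
    using cyclic_colour_strong cyclic_colour_less
    by (intro strong_chromatic_number_eqI[where c = cyclic_colour]) (auto simp: strong_colouring_def)
qed

definition block :: "nat \<Rightarrow> nat \<Rightarrow> nat set" where
  "block k i =
    (if i < k + 4 then {i, i + 1, i + 3}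
     else if i = k + 4 then {k + 4, k + 5, 0}
     else if i = k + 5 then {k + 5, k + 6, 1}
     else if i = k + 6 then {k + 7, k + 8, k + 9}
     else if i = k + 7 then {k + 7, k + 10, k + 11}
     else if i = k + 8 then {k + 8, k + 10, k + 12}
     else if i = k + 9 then {k + 9, k + 11, k + 12}
     else if i = k + 10 then {k + 7, k + 12, k + 6}
     else if i = k + 11 then {k + 8, k + 11, 0}
     else {k + 9, k + 10, 2})"

text \<open>
  The last nine blocks do not depend on k up to relabelling: they are the images of the blocks
  below under the injection fixing 0, 1, 2 and shifting the other points by k + 1.
\<close>

definition tail_block :: "nat \<Rightarrow> nat set" where
  "tail_block j =
    [{3, 4, 0}, {4, 5, 1}, {6, 7, 8}, {6, 9, 10}, {7, 9, 11}, {8, 10, 11}, {6, 11, 5}, {7, 10, 0}, {8, 9, 2}] ! j"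

definition tail_point :: "nat \<Rightarrow> nat \<Rightarrow> nat" where
  "tail_point k x = (if x < 3 then x else x + k + 1)"

lemma inj_tail_point: "inj (tail_point k)"
  unfolding tail_point_def by (rule injI) (auto split: if_splits)

lemma block_tail: "j < 9 \<Longrightarrow> block k (k + 4 + j) = tail_point k ` tail_block j"
proof -
  assume "j < 9"
  then have "j = 0 \<or> j = 1 \<or> j = 2 \<or> j = 3 \<or> j = 4 \<or> j = 5 \<or> j = 6 \<or> j = 7 \<or> j = 8" by arith
  then show ?thesis by (elim disjE) (simp_all add: block_def tail_block_def tail_point_def add.commute)
qed

lemma block_index_cases:
  "(i::nat) < k + 13 \<Longrightarrow> i < k + 4 \<or> i = k + 4 \<or> i = k + 5 \<or> i = k + 6 \<or> i = k + 7 \<or> i = k + 8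
    \<or> i = k + 9 \<or> i = k + 10 \<or> i = k + 11 \<or> i = k + 12"
  by linarith

lemma block_subset_card: "i < k + 13 \<Longrightarrow> block k i \<subseteq> {..<k + 13} \<and> card (block k i) = 3"
  by (drule block_index_cases) (auto simp: block_def)

lemma blocks_through_middle_point:
  "q \<le> k \<Longrightarrow> {i\<in>{..<k + 13}. q + 3 \<in> block k i} = {q, q + 2, q + 3}"
  by (auto simp: block_def)

lemma blocks_through_boundary_points:
  "{i\<in>{..<k + 13}. 0 \<in> block k i} = {0, k + 4, k + 11}"
  "{i\<in>{..<k + 13}. 1 \<in> block k i} = {0, 1, k + 5}"
  "{i\<in>{..<k + 13}. 2 \<in> block k i} = {1, 2, k + 12}"
  "{i\<in>{..<k + 13}. k + 4 \<in> block k i} = {k + 1, k + 3, k + 4}"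
  "{i\<in>{..<k + 13}. k + 5 \<in> block k i} = {k + 2, k + 4, k + 5}"
  "{i\<in>{..<k + 13}. k + 6 \<in> block k i} = {k + 3, k + 5, k + 10}"
  "{i\<in>{..<k + 13}. k + 7 \<in> block k i} = {k + 6, k + 7, k + 10}"
  "{i\<in>{..<k + 13}. k + 8 \<in> block k i} = {k + 6, k + 8, k + 11}"
  "{i\<in>{..<k + 13}. k + 9 \<in> block k i} = {k + 6, k + 9, k + 12}"
  "{i\<in>{..<k + 13}. k + 10 \<in> block k i} = {k + 7, k + 8, k + 12}"
  "{i\<in>{..<k + 13}. k + 11 \<in> block k i} = {k + 7, k + 9, k + 11}"
  "{i\<in>{..<k + 13}. k + 12 \<in> block k i} = {k + 8, k + 9, k + 10}"
  by (auto simp: block_def)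

lemma card_blocks_through:
  assumes "p < k + 13"
  shows "card {i\<in>{..<k + 13}. p \<in> block k i} = 3"
proof (cases "3 \<le> p \<and> p \<le> k + 3")
  case True
  then obtain q where "q \<le> k" "p = q + 3" using le_add_diff_inverse2 by (metis add_le_cancel_right)
  then show ?thesis using blocks_through_middle_point[of q k] by simp
next
  case False
  then have "p = 0 \<or> p = 1 \<or> p = 2 \<or> p = k + 4 \<or> p = k + 5 \<or> p = k + 6 \<or> p = k + 7 \<or> p = k + 8
      \<or> p = k + 9 \<or> p = k + 10 \<or> p = k + 11 \<or> p = k + 12"
    using assms by arith
  then show ?thesis using blocks_through_boundary_points[of k] by (elim disjE) simp_all
qed

lemma path_blocks_pair_unique:
  "(p::nat) \<noteq> q \<Longrightarrow> {p, q} \<subseteq> {i, i + 1, i + 3} \<Longrightarrow> {p, q} \<subseteq> {j, j + 1, j + 3} \<Longrightarrow> i = j"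
  by (simp only: insert_subset insert_iff empty_iff empty_subsetI simp_thms, elim conjE disjE) simp_all

lemma gadget_block_low_points_eq:
  assumes "k + 6 \<le> j" "j < k + 13" "{p, q} \<subseteq> block k j" "p \<le> k + 6" "q \<le> k + 6"
  shows "p = q"
proof -
  have "j = k + 6 \<or> j = k + 7 \<or> j = k + 8 \<or> j = k + 9 \<or> j = k + 10 \<or> j = k + 11 \<or> j = k + 12"
    using assms(1,2) by arith
  then show ?thesis using assms(3-5) by (elim disjE) (auto simp: block_def)
qed

lemma path_tail_blocks_no_common_pair:
  assumes "i < k + 4" "k + 4 \<le> j" "j < k + 13" "p \<noteq> q"
    and path: "{p, q} \<subseteq> {i, i + 1, i + 3}" and tail: "{p, q} \<subseteq> block k j"
  shows False
proof -
  have "p \<le> k + 6" "q \<le> k + 6" using path assms(1) by auto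
  moreover have "p = i \<or> p = i + 1 \<or> p = i + 3" "q = i \<or> q = i + 1 \<or> q = i + 3" using path by auto
  moreover have "j = k + 4 \<or> j = k + 5 \<or> k + 6 \<le> j" using assms(2) by arith
  ultimately show False
    using tail assms(1,3,4) gadget_block_low_points_eq[of k j p q] by (auto simp: block_def)
qed

lemma tail_blocks_meet: "\<forall>i<9. \<forall>j<9. i = j \<or> card (tail_block i \<inter> tail_block j) \<le> 1"
  unfolding tail_block_def by code_simp

lemma block_meet:
  assumes "i < k + 13" "j < k + 13" "i \<noteq> j"
  shows "card (block k i \<inter> block k j) \<le> 1"
proof (cases "k + 4 \<le> i \<and> k + 4 \<le> j")
  case True
  define x y where "x = i - (k + 4)" and "y = j - (k + 4)"
  then have "x < 9" "y < 9" "x \<noteq> y" "i = k + 4 + x" "j = k + 4 + y" using assms True by auto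
  then have "block k i \<inter> block k j = tail_point k ` (tail_block x \<inter> tail_block y)"
    by (simp add: block_tail image_Int[OF inj_tail_point])
  also have "card \<dots> = card (tail_block x \<inter> tail_block y)"
    by (rule card_image) (rule inj_on_subset[OF inj_tail_point], simp)
  finally show ?thesis using tail_blocks_meet \<open>x < 9\<close> \<open>y < 9\<close> \<open>x \<noteq> y\<close> by auto
next
  case False
  have unique: "i' = j'" if "i' < k + 4" "j' < k + 13" "p \<noteq> q" "{p, q} \<subseteq> block k i' \<inter> block k j'"
    for i' j' p q
  proof (cases "j' < k + 4")
    case True
    then show ?thesis using that path_blocks_pair_unique[of p q i' j'] by (simp add: block_def)
  next
    case False
    then show ?thesis using that path_tail_blocks_no_common_pair[of i' k j' p q] by (simp add: block_def)
  qed
  have "finite (block k i \<inter> block k j)" using block_subset_card[OF assms(1)] by (simp add: card_ge_0_finite)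
  moreover have "p = q" if "p \<in> block k i \<inter> block k j" "q \<in> block k i \<inter> block k j" for p q
    using False unique[of i j p q] unique[of j i p q] that assms by (cases "p = q") auto
  ultimately show ?thesis by (simp add: card_le_Suc0_iff_eq)
qed

lemma block_connected: "connected_config {..<k + 13} (block k ` {..<k + 13})"
proof (rule connected_config_image)
  fix S assume closed: "\<forall>i\<in>{..<k + 13}. block k i \<inter> S \<noteq> {} \<longrightarrow> block k i \<subseteq> S" and "0 \<in> S"
  have spread: "block k i \<subseteq> S" if "x \<in> S" "x \<in> block k i" "i < k + 13" for x i
    using closed that by auto
  have "\<exists>i\<in>{..<k + 13}. t \<in> block k i \<and> Suc t \<in> block k i" if "t < k + 4" for t
    using that by (intro bexI[of _ t]) (auto simp: block_def)
  then have path: "{0..k + 4} \<subseteq> S" using closed \<open>0 \<in> S\<close> by (intro closed_set_contains_chain) auto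
  then have "1 \<in> S" "2 \<in> S" "k + 4 \<in> S" by auto
  have "k + 5 \<in> S" using spread[OF \<open>k + 4 \<in> S\<close>, of "k + 4"] by (auto simp: block_def)
  moreover have "k + 6 \<in> S" using spread[OF \<open>1 \<in> S\<close>, of "k + 5"] by (auto simp: block_def)
  moreover have "{k + 7, k + 12} \<subseteq> S" using spread[of "k + 6" "k + 10"] calculation by (auto simp: block_def)
  moreover have "{k + 8, k + 11} \<subseteq> S" using spread[of 0 "k + 11"] \<open>0 \<in> S\<close> by (auto simp: block_def)
  moreover have "{k + 9, k + 10} \<subseteq> S" using spread[OF \<open>2 \<in> S\<close>, of "k + 12"] by (auto simp: block_def)
  ultimately have "{k + 5, k + 6, k + 7, k + 8, k + 9, k + 10, k + 11, k + 12} \<subseteq> S" by auto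
  moreover have "{..<k + 13} \<subseteq> {0..k + 4} \<union> {k + 5, k + 6, k + 7, k + 8, k + 9, k + 10, k + 11, k + 12}"
    by (auto; arith)
  ultimately show "{..<k + 13} \<subseteq> S" using path by blast
qed (use block_subset_card in auto)

lemma new_points_collinear:
  assumes "p \<in> {k + 7..<k + 13}" "q \<in> {k + 7..<k + 13}" "p \<noteq> q"
  shows "\<exists>b\<in>block k ` {..<k + 13}. p \<in> b \<and> q \<in> b"
proof -
  have "\<forall>a<6. \<forall>b<6. a = b \<or> list_ex (\<lambda>j. 6 + a \<in> tail_block j \<and> 6 + b \<in> tail_block j) [0..<9]"
    unfolding tail_block_def by code_simp
  moreover have "p - (k + 7) < 6" "q - (k + 7) < 6" "p - (k + 7) \<noteq> q - (k + 7)" using assms by auto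
  ultimately have "list_ex (\<lambda>j. 6 + (p - (k + 7)) \<in> tail_block j \<and> 6 + (q - (k + 7)) \<in> tail_block j) [0..<9]"
    by blast
  then obtain j where "j < 9" "6 + (p - (k + 7)) \<in> tail_block j" "6 + (q - (k + 7)) \<in> tail_block j"
    by (auto simp: list_ex_iff)
  moreover have "p = tail_point k (6 + (p - (k + 7)))" "q = tail_point k (6 + (q - (k + 7)))"
    using assms by (auto simp: tail_point_def)
  ultimately have "p \<in> block k (k + 4 + j)" "q \<in> block k (k + 4 + j)" by (metis block_tail imageI)+
  then show ?thesis using \<open>j < 9\<close> by (intro bexI[of _ "block k (k + 4 + j)"]) auto
qed

text \<open>
  The point k + 6 shares blocks with points of colours 0, 1, 4, 5 and (k + 3) mod 4, hence the
  case split on k mod 4.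
\<close>

definition block_colour :: "nat \<Rightarrow> nat \<Rightarrow> nat" where
  "block_colour k p =
    (if p < k + 4 then p mod 4
     else if p = k + 4 then 4
     else if p = k + 5 then 5
     else if p = k + 6 then (if k mod 4 = 0 then 2 else 3)
     else if p = k + 7 then 0
     else if p = k + 8 then 2
     else if p = k + 9 then 3
     else if p = k + 10 then 4
     else if p = k + 11 then 5
     else 1)"

lemma mod4_add_distinct:
  "(i::nat) mod 4 \<noteq> (i + 1) mod 4 \<and> i mod 4 \<noteq> (i + 3) mod 4 \<and> (i + 1) mod 4 \<noteq> (i + 3) mod 4"
proof -
  have "i mod 4 = 0 \<or> i mod 4 = 1 \<or> i mod 4 = 2 \<or> i mod 4 = 3" by arith
  then show ?thesis by (subst (1 2 3) mod_add_left_eq[symmetric], subst mod_add_left_eq[symmetric]) auto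
qed

lemma block_colour_path:
  assumes "i < k + 4"
  shows "inj_on (block_colour k) {i, i + 1, i + 3}"
proof -
  have "i + 3 < k + 4 \<or> i = k + 1 \<or> i = k + 2 \<or> i = k + 3" using assms by arith
  moreover have "k mod 4 = 0 \<or> k mod 4 = 1 \<or> k mod 4 = 2 \<or> k mod 4 = 3" by arith
  ultimately show ?thesis
    using mod4_add_distinct[of i] mod_less_divisor[of 4 i] mod_add_left_eq[of k 4 3, symmetric]
    by (elim disjE) (auto simp: block_colour_def)
qed

lemma block_colour_strong:
  assumes "i < k + 13"
  shows "inj_on (block_colour k) (block k i)"
proof (cases "i < k + 4")
  case True
  then show ?thesis using block_colour_path by (simp add: block_def)
next
  case False
  then have "i = k + 4 \<or> i = k + 5 \<or> i = k + 6 \<or> i = k + 7 \<or> i = k + 8 \<or> i = k + 9 \<or> i = k + 10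
      \<or> i = k + 11 \<or> i = k + 12"
    using assms by arith
  then show ?thesis by (elim disjE) (simp_all add: block_def block_colour_def)
qed

lemma block_colour_less: "block_colour k p < 6"
  unfolding block_colour_def by auto

lemma glued_config:
  "sym_config {..<k + 13} (block k ` {..<k + 13}) \<and> connected_config {..<k + 13} (block k ` {..<k + 13})
    \<and> strong_chromatic_number {..<k + 13} (block k ` {..<k + 13}) = 6"
proof (intro conjI block_connected)
  show "sym_config {..<k + 13} (block k ` {..<k + 13})"
    using block_subset_card block_meet card_blocks_through by (intro sym_config_image) auto
  have "6 \<le> card (c ` {..<k + 13})" if "strong_colouring (block k ` {..<k + 13}) c" for c
  proof -
    have "card {k + 7..<k + 13} \<le> card (c ` {..<k + 13})"
      by (rule card_le_card_colours_if_pairwise_collinear[OF _ _ that new_points_collinear]) auto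
    then show ?thesis by simp
  qed
  then show "strong_chromatic_number {..<k + 13} (block k ` {..<k + 13}) = 6"
    using block_colour_strong block_colour_less
    by (intro strong_chromatic_number_eqI[where c = "block_colour k"]) (auto simp: strong_colouring_def)
qed

theorem mainTheorem18:
  fixes v :: nat
  assumes "v = 11 \<or> v \<ge> 13"
  shows "\<exists>(P :: nat set) B. sym_config P B \<and> card P = v \<and> connected_config P B \<and>
           strong_chromatic_number P B = 6"
proof (cases "v = 11")
  case True
  then show ?thesis using cyclic_config_11 by (intro exI[of _ "{..<11}"]) auto
next
  case False
  then obtain k where "v = k + 13" using assms by (metis add.commute le_Suc_ex)
  then show ?thesis using glued_config[of k] by (intro exI[of _ "{..<k + 13}"]) auto
qed

end
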